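(* Let $a,b,c\in\mathbb{R}$ with $b>0$ and $-a/b=2n+3$. Let $r(t,\theta)$ be the support function of a family of surfaces in $\mathscr{W}$ evolving by the linear Hopf flow, i.e. $\partial_t r=b\,\partial_\theta^2r+a\cot\theta\,\partial_\theta r+(a+b)r+c$, and let $s(t,\theta)$ be the corresponding astigmatism. Then for $\theta\in(0,\pi)$, $$\frac{\partial}{\partial t}\left(\frac{s}{\sin^{n+2}\theta}\right)=b\,\mathscr{L}^n_n\left(\frac{s}{\sin^{n+2}\theta}\right),$$ where $\mathscr{L}^\mu_\nu=\partial_\theta^2+\cot\theta\,\partial_\theta+(\nu+1)\nu-\frac{\mu^2}{\sin^2\theta}$.
   Context: $\mathscr{W}$ is the set of embedded $C^2$-smooth topological 2-spheres in $\mathbb{R}^3$ that are rotationally symmetric and strictly convex. A surface in $\mathscr{W}$ is parametrised by the inverse Gauss map with $\theta\in[0,\pi]$ the angle between the outward normal and the symmetry axis. The support function is $r=\vec X\cdot\hat n$, the radii of curvature are $r_1=\frac{\cos^2\theta}{\sin\theta}\partial_\theta\left(\frac{r}{\cos\theta}\right)$, $r_2=\partial_\theta^2 r+r$, and the astigmatism is $s=r_2-r_1$. The linear Hopf flow is $(\partial_t\vec X)^\perp=(ar_1+br_2+c)\hat n$, which is equivalent to the stated evolution of the support function. The support function is assumed differentiable enough in $t,\theta$ for all derivatives appearing to exist. *)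

theory Defs
  imports "HOL-Analysis.Analysis"
begin

text \<open>Functions of two variables r t \<theta> (time t, Gauss-map angle \<theta>).\<close>

definition dt :: "(real \<Rightarrow> real \<Rightarrow> real) \<Rightarrow> real \<Rightarrow> real \<Rightarrow> real" where
  "dt f t \<theta> = deriv (\<lambda>x. f x \<theta>) t"

definition dth :: "(real \<Rightarrow> real \<Rightarrow> real) \<Rightarrow> real \<Rightarrow> real \<Rightarrow> real" where
  "dth f t \<theta> = deriv (\<lambda>x. f t x) \<theta>"

fun pdiff :: "bool list \<Rightarrow> (real \<Rightarrow> real \<Rightarrow> real) \<Rightarrow> real \<Rightarrow> real \<Rightarrow> real" where
  "pdiff [] f = f"
| "pdiff (d # w) f = (if d then dt (pdiff w f) else dth (pdiff w f))"

definition Ck_on :: "nat \<Rightarrow> (real \<Rightarrow> real \<Rightarrow> real) \<Rightarrow> (real \<times> real) set \<Rightarrow> bool" where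
  "Ck_on k f U \<longleftrightarrow>
     (\<forall>w. length w < k \<longrightarrow> (\<forall>(t,\<theta>)\<in>U.
         (\<lambda>x. pdiff w f x \<theta>) differentiable (at t) \<and> (\<lambda>x. pdiff w f t x) differentiable (at \<theta>)))
   \<and> (\<forall>w. length w \<le> k \<longrightarrow> continuous_on U (\<lambda>(t,\<theta>). pdiff w f t \<theta>))"

text \<open>Radii of curvature. r1 = cos^2/sin * d/d\<theta>(r/cos) written out as cot * r_\<theta> + r
  (the two agree wherever cos \<noteq> 0; the expanded form is the continuous extension).\<close>
definition rad1 :: "(real \<Rightarrow> real \<Rightarrow> real) \<Rightarrow> real \<Rightarrow> real \<Rightarrow> real" where
  "rad1 r t \<theta> = cot \<theta> * dth r t \<theta> + r t \<theta>"

definition rad2 :: "(real \<Rightarrow> real \<Rightarrow> real) \<Rightarrow> real \<Rightarrow> real \<Rightarrow> real" where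
  "rad2 r t \<theta> = dth (dth r) t \<theta> + r t \<theta>"

definition astig :: "(real \<Rightarrow> real \<Rightarrow> real) \<Rightarrow> real \<Rightarrow> real \<Rightarrow> real" where
  "astig r t \<theta> = rad2 r t \<theta> - rad1 r t \<theta>"

definition legendre_op :: "real \<Rightarrow> real \<Rightarrow> (real \<Rightarrow> real) \<Rightarrow> real \<Rightarrow> real" where
  "legendre_op \<mu> \<nu> f \<theta> = deriv (deriv f) \<theta> + cot \<theta> * deriv f \<theta>
      + ((\<nu> + 1) * \<nu> - \<mu>\<^sup>2 / (sin \<theta>)\<^sup>2) * f \<theta>"

end

theory Submission
  imports Defs
begin

text \<open>
  Differentiating the flow equation in \<open>\<theta>\<close> and commuting \<open>\<partial>\<^sub>t\<close> with \<open>\<partial>\<^sub>\<theta>\<close> (Schwarz's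
  theorem, obtained by differentiating under the integral sign) shows that the astigmatism \<open>s = r'' - cot \<theta> r'\<close> evolves by
  \<open>\<partial>\<^sub>t s = b s'' + a cot \<theta> s' + (a + b) (1 - 2 / sin\<^sup>2 \<theta>) s\<close>.
  On the other hand, conjugating the Legendre operator by \<open>sin\<^sup>k\<close> gives
  \<open>sin\<^sup>k \<theta> \<L>\<^sup>\<mu>\<^sub>\<nu> (s / sin\<^sup>k) = s'' - (2k - 1) cot \<theta> s' + (\<nu>(\<nu> + 1) - k(k - 1) - (\<mu>\<^sup>2 - k\<^sup>2) / sin\<^sup>2 \<theta>) s\<close>.
  For \<open>k = n + 2\<close>, \<open>\<mu> = \<nu> = n\<close> and \<open>a = -(2n + 3) b\<close> the two right-hand sides agree
  up to the factor \<open>b\<close>.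
\<close>

definition astigmatism :: "(real \<Rightarrow> real) \<Rightarrow> real \<Rightarrow> real" where
  "astigmatism \<rho> \<theta> = deriv (deriv \<rho>) \<theta> - cot \<theta> * deriv \<rho> \<theta>"

definition linear_hopf_rhs :: "real \<Rightarrow> real \<Rightarrow> real \<Rightarrow> (real \<Rightarrow> real) \<Rightarrow> real \<Rightarrow> real" where
  "linear_hopf_rhs a b c \<rho> \<theta> = b * deriv (deriv \<rho>) \<theta> + a * cot \<theta> * deriv \<rho> \<theta> + (a + b) * \<rho> \<theta> + c"

lemma inverse_sin_power2_eq: "sin y \<noteq> 0 \<Longrightarrow> inverse ((sin y)\<^sup>2) = 1 + (cot y)\<^sup>2"
  using sin_cos_squared_add[of y] by (simp add: cot_def power_divide field_simps)

lemma has_real_derivative_cot: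
  "sin y \<noteq> 0 \<Longrightarrow> (cot has_real_derivative -(1 + (cot y)\<^sup>2)) (at y)"
  using DERIV_cot[of y] inverse_sin_power2_eq[of y] by simp

lemma has_real_derivative_inverse_sin_power:
  assumes "sin y \<noteq> 0"
  shows "((\<lambda>y. inverse (sin y ^ k)) has_real_derivative -(real k * cot y * inverse (sin y ^ k))) (at y)"
proof -
  have "((\<lambda>y. inverse (sin y ^ k)) has_real_derivative
      - (inverse (sin y ^ k) * (real k * sin y ^ (k - 1) * cos y) * inverse (sin y ^ k))) (at y)"
    using assms by (auto intro!: derivative_eq_intros)
  moreover have "inverse (sin y ^ k) * (real k * sin y ^ (k - 1) * cos y) * inverse (sin y ^ k)
      = real k * cot y * inverse (sin y ^ k)"
    using assms by (cases k) (simp_all add: cot_def field_simps)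
  ultimately show ?thesis by metis
qed

lemma has_real_derivative_deriv_within_open:
  assumes "open I" "\<theta> \<in> I" "\<And>y. y \<in> I \<Longrightarrow> (f has_real_derivative f' y) (at y)"
    and "(f' has_real_derivative f'') (at \<theta>)"
  shows "(deriv f has_real_derivative f'') (at \<theta>)"
  using assms(4,1,2) by (rule has_field_derivative_transform_within_open) (metis DERIV_imp_deriv assms(3))

lemma deriv_deriv_eq_within_open:
  assumes "open I" "\<theta> \<in> I" "\<And>y. y \<in> I \<Longrightarrow> (f has_real_derivative f' y) (at y)"
    and "(f' has_real_derivative f'') (at \<theta>)"
  shows "deriv (deriv f) \<theta> = f''"
  using has_real_derivative_deriv_within_open[OF assms] by (rule DERIV_imp_deriv)

lemma astigmatism_cong_within_open:
  assumes "open I" "\<theta> \<in> I" "\<And>y. y \<in> I \<Longrightarrow> f y = g y"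
  shows "astigmatism f \<theta> = astigmatism g \<theta>"
proof -
  have "eventually (\<lambda>y. f y = g y) (nhds x)" if "x \<in> I" for x
    using assms(1,3) that by (auto simp: eventually_nhds)
  then have deriv_eq: "deriv f y = deriv g y" if "y \<in> I" for y
    using that by (auto intro: deriv_cong_ev)
  then have "eventually (\<lambda>y. deriv f y = deriv g y) (nhds \<theta>)"
    using assms(1,2) by (auto simp: eventually_nhds)
  then show ?thesis
    using deriv_eq assms(2) by (simp add: astigmatism_def deriv_cong_ev)
qed

lemma has_real_derivative_astigmatism:
  assumes I: "\<theta> \<in> I" "\<And>y. y \<in> I \<Longrightarrow> sin y \<noteq> 0"
    and D: "\<And>j y. j < 3 \<Longrightarrow> y \<in> I \<Longrightarrow> (deriv ^^ j) \<rho> differentiable at y"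
    and D3: "(deriv ^^ 3) \<rho> differentiable at \<theta>"
  defines "s' \<equiv> \<lambda>y. deriv (deriv (deriv \<rho>)) y + (1 + (cot y)\<^sup>2) * deriv \<rho> y - cot y * deriv (deriv \<rho>) y"
  shows "\<And>y. y \<in> I \<Longrightarrow> (astigmatism \<rho> has_real_derivative s' y) (at y)"
    and "(s' has_real_derivative deriv (deriv (deriv (deriv \<rho>))) \<theta> + 2 * (1 + (cot \<theta>)\<^sup>2) * astigmatism \<rho> \<theta>
           - cot \<theta> * deriv (deriv (deriv \<rho>)) \<theta>) (at \<theta>)"
proof -
  have d: "(deriv \<rho> has_real_derivative deriv (deriv \<rho>) y) (at y)"
    "(deriv (deriv \<rho>) has_real_derivative deriv (deriv (deriv \<rho>)) y) (at y)" if "y \<in> I" for y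
    using D[of 1 y] D[of 2 y] that by (simp_all add: DERIV_deriv_iff_real_differentiable eval_nat_numeral)
  have d3: "(deriv (deriv (deriv \<rho>)) has_real_derivative deriv (deriv (deriv (deriv \<rho>))) \<theta>) (at \<theta>)"
    using D3 by (simp add: DERIV_deriv_iff_real_differentiable eval_nat_numeral)
  have dcot: "(cot has_real_derivative -(1 + (cot y)\<^sup>2)) (at y)" if "y \<in> I" for y
    using has_real_derivative_cot I(2)[OF that] .
  show "(astigmatism \<rho> has_real_derivative s' y) (at y)" if "y \<in> I" for y
    unfolding astigmatism_def[abs_def] s'_def using that
    by (auto intro!: derivative_eq_intros d dcot simp: algebra_simps)
  show "(s' has_real_derivative deriv (deriv (deriv (deriv \<rho>))) \<theta> + 2 * (1 + (cot \<theta>)\<^sup>2) * astigmatism \<rho> \<theta>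
           - cot \<theta> * deriv (deriv (deriv \<rho>)) \<theta>) (at \<theta>)"
    unfolding s'_def astigmatism_def using I(1)
    by (auto intro!: derivative_eq_intros d d3 dcot simp: algebra_simps power2_eq_square)
qed

lemma has_real_derivative_linear_hopf_rhs:
  fixes a b c :: real
  assumes I: "\<theta> \<in> I" "\<And>y. y \<in> I \<Longrightarrow> sin y \<noteq> 0"
    and D: "\<And>j y. j < 3 \<Longrightarrow> y \<in> I \<Longrightarrow> (deriv ^^ j) \<rho> differentiable at y"
    and D3: "(deriv ^^ 3) \<rho> differentiable at \<theta>"
  defines "F' \<equiv> \<lambda>y. b * deriv (deriv (deriv \<rho>)) y - a * (1 + (cot y)\<^sup>2) * deriv \<rho> y
    + a * cot y * deriv (deriv \<rho>) y + (a + b) * deriv \<rho> y"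
  shows "\<And>y. y \<in> I \<Longrightarrow> (linear_hopf_rhs a b c \<rho> has_real_derivative F' y) (at y)"
    and "(F' has_real_derivative b * deriv (deriv (deriv (deriv \<rho>))) \<theta> - 2 * a * (1 + (cot \<theta>)\<^sup>2) * astigmatism \<rho> \<theta>
           + a * cot \<theta> * deriv (deriv (deriv \<rho>)) \<theta> + (a + b) * deriv (deriv \<rho>) \<theta>) (at \<theta>)"
proof -
  have d: "(\<rho> has_real_derivative deriv \<rho> y) (at y)"
    "(deriv \<rho> has_real_derivative deriv (deriv \<rho>) y) (at y)"
    "(deriv (deriv \<rho>) has_real_derivative deriv (deriv (deriv \<rho>)) y) (at y)" if "y \<in> I" for y
    using D[of 0 y] D[of 1 y] D[of 2 y] that
    by (simp_all add: DERIV_deriv_iff_real_differentiable eval_nat_numeral)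
  have d3: "(deriv (deriv (deriv \<rho>)) has_real_derivative deriv (deriv (deriv (deriv \<rho>))) \<theta>) (at \<theta>)"
    using D3 by (simp add: DERIV_deriv_iff_real_differentiable eval_nat_numeral)
  have dcot: "(cot has_real_derivative -(1 + (cot y)\<^sup>2)) (at y)" if "y \<in> I" for y
    using has_real_derivative_cot I(2)[OF that] .
  show "(linear_hopf_rhs a b c \<rho> has_real_derivative F' y) (at y)" if "y \<in> I" for y
    unfolding linear_hopf_rhs_def[abs_def] F'_def using that
    by (auto intro!: derivative_eq_intros d dcot simp: algebra_simps)
  show "(F' has_real_derivative b * deriv (deriv (deriv (deriv \<rho>))) \<theta> - 2 * a * (1 + (cot \<theta>)\<^sup>2) * astigmatism \<rho> \<theta>
           + a * cot \<theta> * deriv (deriv (deriv \<rho>)) \<theta> + (a + b) * deriv (deriv \<rho>) \<theta>) (at \<theta>)"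
    unfolding F'_def astigmatism_def using I(1)
    by (auto intro!: derivative_eq_intros d d3 dcot simp: algebra_simps power2_eq_square)
qed

lemma astigmatism_linear_hopf_rhs:
  assumes I: "open I" "\<theta> \<in> I" "\<And>y. y \<in> I \<Longrightarrow> sin y \<noteq> 0"
    and D: "\<And>j y. j < 3 \<Longrightarrow> y \<in> I \<Longrightarrow> (deriv ^^ j) \<rho> differentiable at y"
    and D3: "(deriv ^^ 3) \<rho> differentiable at \<theta>"
  shows "astigmatism (linear_hopf_rhs a b c \<rho>) \<theta> = b * deriv (deriv (astigmatism \<rho>)) \<theta>
           + a * cot \<theta> * deriv (astigmatism \<rho>) \<theta> + (a + b) * (1 - 2 / (sin \<theta>)\<^sup>2) * astigmatism \<rho> \<theta>"
proof -
  define \<rho>1 \<rho>2 \<rho>3 where "\<rho>1 = deriv \<rho>" and "\<rho>2 = deriv \<rho>1" and "\<rho>3 = deriv \<rho>2"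
  define \<rho>4 where "\<rho>4 = deriv \<rho>3 \<theta>"
  define q :: "real \<Rightarrow> real" where "q y = 1 + (cot y)\<^sup>2" for y
  define F where "F = linear_hopf_rhs a b c \<rho>"
  define s where "s = astigmatism \<rho>"
  have dF: "(F has_real_derivative b * \<rho>3 y - a * q y * \<rho>1 y + a * cot y * \<rho>2 y + (a + b) * \<rho>1 y) (at y)"
    if "y \<in> I" for y
    unfolding F_def \<rho>1_def \<rho>2_def \<rho>3_def q_def
    by (rule has_real_derivative_linear_hopf_rhs(1)[of \<theta> I]) (simp_all add: I D D3 that)
  have ddF: "((\<lambda>y. b * \<rho>3 y - a * q y * \<rho>1 y + a * cot y * \<rho>2 y + (a + b) * \<rho>1 y) has_real_derivative
      b * \<rho>4 - 2 * a * q \<theta> * s \<theta> + a * cot \<theta> * \<rho>3 \<theta> + (a + b) * \<rho>2 \<theta>) (at \<theta>)"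
    unfolding s_def \<rho>1_def \<rho>2_def \<rho>3_def \<rho>4_def q_def
    by (rule has_real_derivative_linear_hopf_rhs(2)[of \<theta> I]) (simp_all add: I D D3)
  have ds: "(s has_real_derivative \<rho>3 y + q y * \<rho>1 y - cot y * \<rho>2 y) (at y)" if "y \<in> I" for y
    unfolding s_def \<rho>1_def \<rho>2_def \<rho>3_def q_def
    by (rule has_real_derivative_astigmatism(1)[of \<theta> I]) (simp_all add: I D D3 that)
  have dds: "((\<lambda>y. \<rho>3 y + q y * \<rho>1 y - cot y * \<rho>2 y) has_real_derivative
      \<rho>4 + 2 * q \<theta> * s \<theta> - cot \<theta> * \<rho>3 \<theta>) (at \<theta>)"
    unfolding s_def \<rho>1_def \<rho>2_def \<rho>3_def \<rho>4_def q_def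
    by (rule has_real_derivative_astigmatism(2)[of \<theta> I]) (simp_all add: I D D3)
  have F12: "astigmatism F \<theta> = (b * \<rho>4 - 2 * a * q \<theta> * s \<theta> + a * cot \<theta> * \<rho>3 \<theta> + (a + b) * \<rho>2 \<theta>)
      - cot \<theta> * (b * \<rho>3 \<theta> - a * q \<theta> * \<rho>1 \<theta> + a * cot \<theta> * \<rho>2 \<theta> + (a + b) * \<rho>1 \<theta>)"
    unfolding astigmatism_def
    using deriv_deriv_eq_within_open[of I \<theta> F, OF I(1,2) dF ddF] DERIV_imp_deriv[OF dF[OF I(2)]] by simp
  have s1: "deriv s \<theta> = \<rho>3 \<theta> + q \<theta> * \<rho>1 \<theta> - cot \<theta> * \<rho>2 \<theta>"
    using ds[OF I(2)] by (rule DERIV_imp_deriv)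
  have s2: "deriv (deriv s) \<theta> = \<rho>4 + 2 * q \<theta> * s \<theta> - cot \<theta> * \<rho>3 \<theta>"
    using I(1,2) ds dds by (rule deriv_deriv_eq_within_open)
  have s0: "s \<theta> = \<rho>2 \<theta> - cot \<theta> * \<rho>1 \<theta>"
    by (simp add: s_def astigmatism_def \<rho>1_def \<rho>2_def)
  have sin2: "2 / (sin \<theta>)\<^sup>2 = 2 * q \<theta>"
    using inverse_sin_power2_eq[OF I(3)[OF I(2)]] by (simp add: q_def divide_inverse)
  show ?thesis
    unfolding F_def[symmetric] s_def[symmetric] F12 s2 s1 s0 sin2
    by (simp add: q_def algebra_simps power2_eq_square)
qed

lemma legendre_op_divide_sin_power:
  assumes I: "open I" "\<theta> \<in> I" "\<And>y. y \<in> I \<Longrightarrow> sin y \<noteq> 0"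
    and D: "\<And>y. y \<in> I \<Longrightarrow> s differentiable at y" and D1: "deriv s differentiable at \<theta>"
  shows "legendre_op \<mu> \<nu> (\<lambda>y. s y / sin y ^ k) \<theta> =
    (deriv (deriv s) \<theta> - (2 * real k - 1) * cot \<theta> * deriv s \<theta>
      + (\<nu> * (\<nu> + 1) - real k * (real k - 1) - (\<mu>\<^sup>2 - (real k)\<^sup>2) / (sin \<theta>)\<^sup>2) * s \<theta>)
    / sin \<theta> ^ k"
proof -
  define s1 where "s1 = deriv s"
  define s2 where "s2 = deriv s1 \<theta>"
  define q :: "real \<Rightarrow> real" where "q y = 1 + (cot y)\<^sup>2" for y
  define W :: "real \<Rightarrow> real" where "W y = inverse (sin y ^ k)" for y
  define g where "g y = s y / sin y ^ k" for y
  have ds: "(s has_real_derivative s1 y) (at y)" if "y \<in> I" for y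
    using D[OF that] by (simp add: s1_def DERIV_deriv_iff_real_differentiable)
  have ds1: "(s1 has_real_derivative s2) (at \<theta>)"
    using D1 by (simp add: s1_def s2_def DERIV_deriv_iff_real_differentiable)
  have dcot: "(cot has_real_derivative -q y) (at y)" if "y \<in> I" for y
    unfolding q_def using has_real_derivative_cot I(3)[OF that] .
  have dW: "(W has_real_derivative -(real k * cot y * W y)) (at y)" if "y \<in> I" for y
    unfolding W_def[abs_def] using has_real_derivative_inverse_sin_power[OF I(3)[OF that]]
    by (simp add: W_def)
  have g_eq: "g = (\<lambda>y. s y * W y)"
    by (simp add: g_def W_def divide_inverse fun_eq_iff)
  have dg: "(g has_real_derivative (s1 y - k * cot y * s y) * W y) (at y)" if "y \<in> I" for y
    unfolding g_eq using that by (auto intro!: derivative_eq_intros ds dW simp: algebra_simps)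
  have ddg: "((\<lambda>y. (s1 y - k * cot y * s y) * W y) has_real_derivative
      (s2 + k * q \<theta> * s \<theta> - 2 * k * cot \<theta> * s1 \<theta> + k\<^sup>2 * (cot \<theta>)\<^sup>2 * s \<theta>) * W \<theta>) (at \<theta>)"
    using I(2) by (auto intro!: derivative_eq_intros ds ds1 dcot dW simp: algebra_simps power2_eq_square)
  have g1: "deriv g \<theta> = (s1 \<theta> - k * cot \<theta> * s \<theta>) * W \<theta>"
    using dg[OF I(2)] by (rule DERIV_imp_deriv)
  have g2: "deriv (deriv g) \<theta> = (s2 + k * q \<theta> * s \<theta> - 2 * k * cot \<theta> * s1 \<theta> + k\<^sup>2 * (cot \<theta>)\<^sup>2 * s \<theta>) * W \<theta>"
    using I(1,2) dg ddg by (rule deriv_deriv_eq_within_open)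
  have "1 / (sin \<theta>)\<^sup>2 = 1 + (cot \<theta>)\<^sup>2"
    using inverse_sin_power2_eq[OF I(3)[OF I(2)]] by (simp add: divide_inverse)
  then show ?thesis
    unfolding legendre_op_def g_def[symmetric] g1 g2 s1_def[symmetric] s2_def[symmetric]
    by (simp add: g_def W_def q_def divide_inverse algebra_simps power2_eq_square)
qed

lemma astigmatism_linear_hopf_rhs_divide_sin_power:
  assumes a: "a = - (2 * real n + 3) * b"
    and I: "open I" "\<theta> \<in> I" "\<And>y. y \<in> I \<Longrightarrow> sin y \<noteq> 0"
    and D: "\<And>j y. j < 3 \<Longrightarrow> y \<in> I \<Longrightarrow> (deriv ^^ j) \<rho> differentiable at y"
    and D3: "(deriv ^^ 3) \<rho> differentiable at \<theta>"
  shows "astigmatism (linear_hopf_rhs a b c \<rho>) \<theta> / sin \<theta> ^ (n + 2)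
    = b * legendre_op (real n) (real n) (\<lambda>y. astigmatism \<rho> y / sin y ^ (n + 2)) \<theta>"
proof -
  define s' where "s' y = deriv (deriv (deriv \<rho>)) y + (1 + (cot y)\<^sup>2) * deriv \<rho> y
    - cot y * deriv (deriv \<rho>) y" for y
  have ds: "(astigmatism \<rho> has_real_derivative s' y) (at y)" if "y \<in> I" for y
    unfolding s'_def by (rule has_real_derivative_astigmatism(1)[of \<theta> I]) (simp_all add: I D D3 that)
  have "\<exists>s''. (s' has_real_derivative s'') (at \<theta>)"
    unfolding s'_def[abs_def] by (rule exI, rule has_real_derivative_astigmatism(2)[of \<theta> I]) (simp_all add: I D D3)
  then have "deriv (astigmatism \<rho>) differentiable at \<theta>"
    using has_real_derivative_deriv_within_open[OF I(1,2) ds] by (auto simp: real_differentiable_def)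
  with ds have L: "legendre_op (real n) (real n) (\<lambda>y. astigmatism \<rho> y / sin y ^ (n + 2)) \<theta> =
    (deriv (deriv (astigmatism \<rho>)) \<theta> - (2 * real (n + 2) - 1) * cot \<theta> * deriv (astigmatism \<rho>) \<theta>
      + (real n * (real n + 1) - real (n + 2) * (real (n + 2) - 1)
         - ((real n)\<^sup>2 - (real (n + 2))\<^sup>2) / (sin \<theta>)\<^sup>2) * astigmatism \<rho> \<theta>) / sin \<theta> ^ (n + 2)"
    by (intro legendre_op_divide_sin_power[OF I]) (auto simp: real_differentiable_def)
  define z where "z = 1 / (sin \<theta>)\<^sup>2"
  have z: "2 / (sin \<theta>)\<^sup>2 = 2 * z"
    "((real n)\<^sup>2 - (real (n + 2))\<^sup>2) / (sin \<theta>)\<^sup>2 = ((real n)\<^sup>2 - (real (n + 2))\<^sup>2) * z"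
    by (simp_all add: z_def)
  have "astigmatism (linear_hopf_rhs a b c \<rho>) \<theta> = b * deriv (deriv (astigmatism \<rho>)) \<theta>
      + a * cot \<theta> * deriv (astigmatism \<rho>) \<theta> + (a + b) * (1 - 2 / (sin \<theta>)\<^sup>2) * astigmatism \<rho> \<theta>"
    by (rule astigmatism_linear_hopf_rhs[of I]) (simp_all add: I D D3)
  also have "\<dots> = b * (deriv (deriv (astigmatism \<rho>)) \<theta> - (2 * real (n + 2) - 1) * cot \<theta> * deriv (astigmatism \<rho>) \<theta>
      + (real n * (real n + 1) - real (n + 2) * (real (n + 2) - 1)
         - ((real n)\<^sup>2 - (real (n + 2))\<^sup>2) / (sin \<theta>)\<^sup>2) * astigmatism \<rho> \<theta>)"
    unfolding z a by (simp add: algebra_simps power2_eq_square)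
  finally show ?thesis
    unfolding L by simp
qed

lemma has_real_derivative_dth:
  "(\<lambda>y. f x y) differentiable at y \<Longrightarrow> ((\<lambda>y. f x y) has_real_derivative dth f x y) (at y within S)"
  by (simp add: dth_def DERIV_deriv_iff_real_differentiable has_field_derivative_at_within)

lemma has_real_derivative_dt:
  "(\<lambda>x. f x y) differentiable at x \<Longrightarrow> ((\<lambda>x. f x y) has_real_derivative dt f x y) (at x within S)"
  by (simp add: dt_def DERIV_deriv_iff_real_differentiable has_field_derivative_at_within)

lemma has_integral_dth:
  assumes "a \<le> y" and "\<And>u. u \<in> {a..y} \<Longrightarrow> (\<lambda>u. f x u) differentiable at u"
  shows "(dth f x has_integral f x y - f x a) {a..y}"
  using assms(1)
proof (rule fundamental_theorem_of_calculus)
  fix u assume "u \<in> {a..y}"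
  then show "((\<lambda>u. f x u) has_vector_derivative dth f x u) (at u within {a..y})"
    using assms(2) has_real_derivative_dth by (simp add: has_real_derivative_iff_has_vector_derivative)
qed

lemma dt_eq_dt_add_integral_dt_dth:
  fixes f :: "real \<Rightarrow> real \<Rightarrow> real"
  assumes X: "open X" "convex X" "x0 \<in> X" and "a \<le> y"
    and dx: "\<And>x u. x \<in> X \<Longrightarrow> u \<in> {a..y} \<Longrightarrow> (\<lambda>x. f x u) differentiable at x"
    and dy: "\<And>x u. x \<in> X \<Longrightarrow> u \<in> {a..y} \<Longrightarrow> (\<lambda>u. f x u) differentiable at u"
    and dxy: "\<And>x u. x \<in> X \<Longrightarrow> u \<in> {a..y} \<Longrightarrow> (\<lambda>x. dth f x u) differentiable at x"
    and cont: "continuous_on (X \<times> {a..y}) (\<lambda>(x, u). dt (dth f) x u)"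
  shows "dt f x0 y = dt f x0 a + integral {a..y} (dt (dth f) x0)"
proof -
  have ftc: "f x a + integral {a..y} (dth f x) = f x y" if "x \<in> X" for x
    using has_integral_dth[of a y f x, OF \<open>a \<le> y\<close> dy[OF that]] by (simp add: integral_unique)
  have "((\<lambda>x. integral (cbox a y) (dth f x)) has_field_derivative
      integral (cbox a y) (dt (dth f) x0)) (at x0 within X)"
  proof (rule leibniz_rule_field_derivative)
    show "((\<lambda>x. dth f x u) has_field_derivative dt (dth f) x u) (at x within X)"
      if "x \<in> X" "u \<in> cbox a y" for x u
      using dxy that by (simp add: has_real_derivative_dt)
    show "dth f x integrable_on cbox a y" if "x \<in> X" for x
      using has_integral_dth[of a y f x, OF \<open>a \<le> y\<close> dy[OF that]] by (auto simp: has_integral_integrable)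
  qed (use X cont in simp_all)
  then have "((\<lambda>x. integral {a..y} (dth f x)) has_field_derivative
      integral {a..y} (dt (dth f) x0)) (at x0)"
    by (simp add: at_within_open[OF X(3,1)])
  moreover have "((\<lambda>x. f x a) has_real_derivative dt f x0 a) (at x0)"
    by (rule has_real_derivative_dt) (use dx[OF X(3), of a] \<open>a \<le> y\<close> in auto)
  ultimately have "((\<lambda>x. f x a + integral {a..y} (dth f x)) has_field_derivative
      dt f x0 a + integral {a..y} (dt (dth f) x0)) (at x0)"
    by (intro DERIV_add)
  then have "((\<lambda>x. f x y) has_field_derivative dt f x0 a + integral {a..y} (dt (dth f) x0)) (at x0)"
    using X(1,3) by (rule has_field_derivative_transform_within_open) (rule ftc)
  then show ?thesis
    unfolding dt_def by (rule DERIV_imp_deriv)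
qed

lemma dth_dt_eq_dt_dth:
  fixes f :: "real \<Rightarrow> real \<Rightarrow> real"
  assumes "open U" "(x0, y0) \<in> U"
    and dx: "\<And>x y. (x, y) \<in> U \<Longrightarrow> (\<lambda>x. f x y) differentiable at x"
    and dy: "\<And>x y. (x, y) \<in> U \<Longrightarrow> (\<lambda>y. f x y) differentiable at y"
    and dxy: "\<And>x y. (x, y) \<in> U \<Longrightarrow> (\<lambda>x. dth f x y) differentiable at x"
    and cont: "continuous_on U (\<lambda>(x, y). dt (dth f) x y)"
  shows "dth (dt f) x0 y0 = dt (dth f) x0 y0"
proof -
  obtain A B where AB: "open A" "open B" "(x0, y0) \<in> A \<times> B" "A \<times> B \<subseteq> U"
    using open_prod_elim[OF assms(1,2)] .
  obtain e where "e > 0" "ball x0 e \<subseteq> A"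
    using AB(1,3) openE by blast
  obtain d where "d > 0" "cball y0 d \<subseteq> B"
    using AB(2,3) open_contains_cball by blast
  define a where "a = y0 - d"
  have box: "ball x0 e \<times> {a..y0 + d} \<subseteq> U"
    using AB \<open>ball x0 e \<subseteq> A\<close> \<open>cball y0 d \<subseteq> B\<close> by (auto simp: a_def cball_eq_atLeastAtMost)
  have cont_y: "continuous_on {a..y0 + d} (dt (dth f) x0)"
    using box \<open>e > 0\<close>
    by (intro continuous_on_compose2[OF cont, where f = "Pair x0", simplified] continuous_intros) auto
  have dt_eq: "dt f x0 y = dt f x0 a + integral {a..y} (dt (dth f) x0)" if "y \<in> {a<..<y0 + d}" for y
  proof -
    have sub: "ball x0 e \<times> {a..y} \<subseteq> U"
      using box that by fastforce
    then have "(x, u) \<in> U" if "x \<in> ball x0 e" "u \<in> {a..y}" for x u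
      using that by blast
    then show ?thesis
      using \<open>e > 0\<close> that continuous_on_subset[OF cont sub]
      by (intro dt_eq_dt_add_integral_dt_dth) (simp_all add: dx dy dxy)
  qed
  have "((\<lambda>y. integral {a..y} (dt (dth f) x0)) has_real_derivative dt (dth f) x0 y0) (at y0)"
    using integral_has_real_derivative[OF cont_y] \<open>d > 0\<close>
    by (subst at_within_interior[symmetric, of y0 "{a..y0 + d}"]) (auto simp: a_def)
  then have "((\<lambda>y. dt f x0 a + integral {a..y} (dt (dth f) x0)) has_real_derivative dt (dth f) x0 y0) (at y0)"
    by (rule DERIV_add[OF DERIV_const, simplified])
  then have "(dt f x0 has_real_derivative dt (dth f) x0 y0) (at y0)"
    by (rule has_field_derivative_transform_within_open[of _ _ _ "{a<..<y0 + d}"])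
      (use \<open>d > 0\<close> dt_eq in \<open>auto simp: a_def\<close>)
  then show ?thesis
    unfolding dth_def by (rule DERIV_imp_deriv)
qed

lemma Ck_on_differentiable_dt:
  "Ck_on k f U \<Longrightarrow> length w < k \<Longrightarrow> (x, y) \<in> U \<Longrightarrow> (\<lambda>x. pdiff w f x y) differentiable at x"
  unfolding Ck_on_def by blast

lemma Ck_on_differentiable_dth:
  "Ck_on k f U \<Longrightarrow> length w < k \<Longrightarrow> (x, y) \<in> U \<Longrightarrow> (\<lambda>y. pdiff w f x y) differentiable at y"
  unfolding Ck_on_def by blast

lemma Ck_on_continuous_on:
  "Ck_on k f U \<Longrightarrow> length w \<le> k \<Longrightarrow> continuous_on U (\<lambda>(x, y). pdiff w f x y)"
  unfolding Ck_on_def by blast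

lemma Ck_on_dth_dt_pdiff:
  assumes "Ck_on k f U" "open U" "length w + 2 \<le> k" "(x, y) \<in> U"
  shows "dth (dt (pdiff w f)) x y = dt (dth (pdiff w f)) x y"
  using assms(2,4)
proof (rule dth_dt_eq_dt_dth)
  show "(\<lambda>x. pdiff w f x y) differentiable at x" if "(x, y) \<in> U" for x y
    using Ck_on_differentiable_dt[OF assms(1) _ that] assms(3) by simp
  show "(\<lambda>y. pdiff w f x y) differentiable at y" if "(x, y) \<in> U" for x y
    using Ck_on_differentiable_dth[OF assms(1) _ that] assms(3) by simp
  show "(\<lambda>x. dth (pdiff w f) x y) differentiable at x" if "(x, y) \<in> U" for x y
    using Ck_on_differentiable_dt[OF assms(1) _ that, of "False # w"] assms(3) by simp
  show "continuous_on U (\<lambda>(x, y). dt (dth (pdiff w f)) x y)"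
    using Ck_on_continuous_on[OF assms(1), of "True # False # w"] assms(3) by simp
qed

lemma deriv_funpow_eq_pdiff: "(deriv ^^ j) (f t) = pdiff (replicate j False) f t"
  by (induction j) (simp_all add: dth_def[abs_def])

lemma Ck_on_differentiable_deriv_funpow:
  "Ck_on k f U \<Longrightarrow> j < k \<Longrightarrow> (t, y) \<in> U \<Longrightarrow> (deriv ^^ j) (f t) differentiable at y"
  unfolding deriv_funpow_eq_pdiff by (rule Ck_on_differentiable_dth) simp_all

lemma astig_eq_astigmatism: "astig r t = astigmatism (r t)"
  by (simp add: fun_eq_iff astig_def rad1_def rad2_def astigmatism_def dth_def)

lemma has_real_derivative_astig:
  assumes "Ck_on k r U" "3 \<le> k" "open U" "(t, \<theta>) \<in> U"
  shows "((\<lambda>x. astig r x \<theta>) has_real_derivative astigmatism (\<lambda>y. dt r t y) \<theta>) (at t)"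
proof -
  obtain A B where AB: "open B" "(t, \<theta>) \<in> A \<times> B" "A \<times> B \<subseteq> U"
    using open_prod_elim[OF assms(3,4)] by metis
  have dt_dth: "dt (dth r) t y = deriv (\<lambda>y. dt r t y) y" if "y \<in> B" for y
    using Ck_on_dth_dt_pdiff[OF assms(1,3), of "[]" t y] AB that assms(2) by (auto simp: dth_def)
  then have "eventually (\<lambda>y. dt (dth r) t y = deriv (\<lambda>y. dt r t y) y) (nhds \<theta>)"
    using AB(1,2) by (auto simp: eventually_nhds)
  then have "deriv (\<lambda>y. dt (dth r) t y) \<theta> = deriv (deriv (\<lambda>y. dt r t y)) \<theta>"
    by (rule deriv_cong_ev) simp
  then have dt_dth_dth: "dt (dth (dth r)) t \<theta> = deriv (deriv (\<lambda>y. dt r t y)) \<theta>"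
    using Ck_on_dth_dt_pdiff[OF assms(1,3), of "[False]" t \<theta>] assms(2,4) by (simp add: dth_def)
  have "((\<lambda>x. dth (dth r) x \<theta> - cot \<theta> * dth r x \<theta>) has_real_derivative
      dt (dth (dth r)) t \<theta> - cot \<theta> * dt (dth r) t \<theta>) (at t)"
    using Ck_on_differentiable_dt[OF assms(1) _ assms(4), of "[False]"]
      Ck_on_differentiable_dt[OF assms(1) _ assms(4), of "[False, False]"] assms(2)
    by (auto intro!: derivative_eq_intros has_real_derivative_dt)
  then show ?thesis
    using dt_dth[of \<theta>] dt_dth_dth AB(2)
    by (simp add: astig_def rad1_def rad2_def astigmatism_def)
qed

theorem proposition3p3:
  fixes a b c :: real and n :: nat and r :: "real \<Rightarrow> real \<Rightarrow> real" and T :: "real set"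
  assumes "b > 0"
    and "- a / b = 2 * real n + 3"
    and "open T"
    and "Ck_on 4 r (T \<times> {0<..<pi})"
    and "\<And>t \<theta>. t \<in> T \<Longrightarrow> 0 < \<theta> \<Longrightarrow> \<theta> < pi \<Longrightarrow>
           dt r t \<theta> = b * dth (dth r) t \<theta> + a * cot \<theta> * dth r t \<theta> + (a + b) * r t \<theta> + c"
    and "t \<in> T" and "0 < \<theta>" and "\<theta> < pi"
  shows "dt (\<lambda>t' \<theta>'. astig r t' \<theta>' / (sin \<theta>') ^ (n + 2)) t \<theta>
         = b * legendre_op (real n) (real n) (\<lambda>\<theta>'. astig r t \<theta>' / (sin \<theta>') ^ (n + 2)) \<theta>"
proof -
  define I where "I = {0<..<pi :: real}"
  have I: "open I" "\<theta> \<in> I" "\<And>y. y \<in> I \<Longrightarrow> sin y \<noteq> 0"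
    using assms(7,8) sin_gt_zero by (fastforce simp: I_def)+
  have Ck: "Ck_on 4 r (T \<times> I)" and U: "open (T \<times> I)" "(t, \<theta>) \<in> T \<times> I"
    using assms(3,4,6) I by (auto simp: I_def intro: open_Times)
  have flow: "dt r t y = linear_hopf_rhs a b c (r t) y" if "y \<in> I" for y
    using assms(5)[OF assms(6)] that by (simp add: I_def linear_hopf_rhs_def dth_def)
  have "dt (\<lambda>t' \<theta>'. astig r t' \<theta>' / (sin \<theta>') ^ (n + 2)) t \<theta>
      = astigmatism (\<lambda>y. dt r t y) \<theta> / sin \<theta> ^ (n + 2)"
    unfolding dt_def[where f = "\<lambda>t' \<theta>'. astig r t' \<theta>' / sin \<theta>' ^ (n + 2)"]
    by (intro DERIV_imp_deriv DERIV_cdivide has_real_derivative_astig[OF Ck _ U]) simp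
  also have "\<dots> = astigmatism (linear_hopf_rhs a b c (r t)) \<theta> / sin \<theta> ^ (n + 2)"
    using astigmatism_cong_within_open[OF I(1,2) flow] by simp
  also have "\<dots> = b * legendre_op (real n) (real n) (\<lambda>y. astigmatism (r t) y / sin y ^ (n + 2)) \<theta>"
  proof (rule astigmatism_linear_hopf_rhs_divide_sin_power[of _ n b I])
    show "a = - (2 * real n + 3) * b"
      using assms(1,2) by (simp add: field_simps)
  qed (use I U Ck_on_differentiable_deriv_funpow[OF Ck] in auto)
  finally show ?thesis
    by (simp add: astig_eq_astigmatism)
qed

end
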